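(* Let $P\subseteq\mathbb{R}_+$ be a set of positive inner Lebesgue measure and let $q:P\to\mathbb{R}$ be an arbitrary function. If $f:\mathbb{R}_+\to\mathbb{R}_+$ is $(p,q(p))$-Jensen convex for all $p\in P$, i.e. \[ f\big(H_p(x,y)\big)\le H_{q(p)}\big(f(x),f(y)\big)\qquad(x,y>0,\ p\in P), \] then $f$ is continuous, and $f_{p,q(p)}$ is convex on $(\mathbb{R}_+)_p$ for all $p\in P$.
   Context: $\mathbb{R}_+=]0,\infty[$. For $p\in\mathbb{R}$, $H_p(x,y)=\left(\frac{x^p+y^p}{2}\right)^{1/p}$ if $p\neq0$ and $H_0(x,y)=\sqrt{xy}$ ($x,y>0$). For $f:\mathbb{R}_+\to\mathbb{R}_+$ and $(p,q)\in\mathbb{R}^2$ with $p\neq0$, set $(\mathbb{R}_+)_p=\{t^p\mid t>0\}$ and define $f_{p,q}:(\mathbb{R}_+)_p\to\mathbb{R}$ by $f_{p,q}(x)=\operatorname{sign}(q)\big(f(x^{1/p})\big)^q$ if $q\neq0$ and $f_{p,q}(x)=\log f(x^{1/p})$ if $q=0$. *)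

theory Defs
  imports "HOL-Analysis.Analysis"
begin

definition H :: "real \<Rightarrow> real \<Rightarrow> real \<Rightarrow> real" where
  "H p x y = (if p = 0 then sqrt (x * y) else ((x powr p + y powr p) / 2) powr (1 / p))"

definition Rp :: "real \<Rightarrow> real set" where
  "Rp p = {t powr p | t. t > 0}"

definition fpq :: "(real \<Rightarrow> real) \<Rightarrow> real \<Rightarrow> real \<Rightarrow> real \<Rightarrow> real" where
  "fpq f p q x = (if q = 0 then ln (f (x powr (1 / p)))
                  else sgn q * (f (x powr (1 / p))) powr q)"

definition inner_lebesgue_measure :: "real set \<Rightarrow> ennreal" where
  "inner_lebesgue_measure P = (SUP K \<in> {K. compact K \<and> K \<subseteq> P}. emeasure lborel K)"

end

theory Submission
  imports Defs
begin

text \<open>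
  Fix a compact \<open>K \<subseteq> P\<close> of positive measure and \<open>p0 \<in> K\<close>. Jensen's inequality for \<open>p0\<close> makes
  \<open>g = fpq f p0 (q p0)\<close> midpoint convex on \<open>{0<..}\<close>, and the hypothesis at \<open>(x, y) = (1, 2)\<close>
  gives \<open>f (H p 1 2) \<le> max (f 1) (f 2)\<close> for every \<open>p \<in> P\<close>, so \<open>g\<close> is bounded above on
  \<open>A = (\<lambda>p. H p 1 2 powr p0) ` K\<close>. As \<open>p \<mapsto> H p 1 2\<close> is strictly increasing with positive
  continuous derivative, \<open>A\<close> has positive measure; by a Steinhaus-type argument the
  midpoints of \<open>A\<close> fill an interval, on which \<open>g\<close> is then bounded as well. The
  Bernstein--Doetsch theorem makes \<open>g\<close>, hence \<open>f\<close>, continuous, and every \<open>fpq f p (q p)\<close>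
  with \<open>p \<in> P\<close>, being midpoint convex and continuous, is convex.
\<close>

section \<open>Midpoint convex functions\<close>

definition midpoint_convex_on :: "real set \<Rightarrow> (real \<Rightarrow> real) \<Rightarrow> bool" where
  "midpoint_convex_on S g \<longleftrightarrow> (\<forall>u\<in>S. \<forall>v\<in>S. g ((u + v) / 2) \<le> (g u + g v) / 2)"

lemma midpoint_convex_on_dyadic:
  assumes mid: "midpoint_convex_on S g" and S: "convex S" and a: "a \<in> S" and w: "w \<in> S"
  shows "g ((1 - (1/2)^n) * a + (1/2)^n * w) \<le> (1 - (1/2)^n) * g a + (1/2)^n * g w"
proof (induction n)
  case 0
  then show ?case by simp
next
  case (Suc n)
  define t :: real where "t = (1/2)^n"
  have t: "0 \<le> t" "t \<le> 1" unfolding t_def by (auto simp: power_le_one)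
  define x where "x = (1 - t) * a + t * w"
  have x: "x \<in> S"
    unfolding x_def using convexD[OF S a w, of "1 - t" t] t by simp
  have "g ((1 - (1/2)^Suc n) * a + (1/2)^Suc n * w) = g ((a + x) / 2)"
    unfolding x_def t_def by (simp add: field_simps)
  also have "\<dots> \<le> (g a + g x) / 2"
    using mid a x unfolding midpoint_convex_on_def by blast
  also have "\<dots> \<le> (1 - (1/2)^Suc n) * g a + (1/2)^Suc n * g w"
    using Suc unfolding x_def t_def by (simp add: field_simps)
  finally show ?case .
qed

lemma midpoint_convex_on_near_bound:
  assumes mid: "midpoint_convex_on S g" and S: "convex S"
    and ball: "ball z \<rho> \<subseteq> S" and bound: "\<And>y. y \<in> ball z \<rho> \<Longrightarrow> g y \<le> M"
    and x: "\<bar>x - z\<bar> < (1/2)^n * \<rho>"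
  shows "\<bar>g x - g z\<bar> \<le> (1/2)^n * (M - g z)"
proof -
  define h where "h = x - z"
  have h: "\<bar>h\<bar> < (1/2)^n * \<rho>" and x_eq: "x = z + h" using x unfolding h_def by auto
  define t :: real where "t = (1/2)^n"
  have t: "t > 0" "t \<le> 1" unfolding t_def by (auto simp: power_le_one)
  have "0 < t * \<rho>" using h unfolding t_def by linarith
  then have "\<rho> > 0" using t by (simp add: zero_less_mult_iff)
  then have z: "z \<in> S" using ball by auto
  have upper: "g (z + k) \<le> g z + t * (M - g z)" if k: "\<bar>k\<bar> < t * \<rho>" for k
  proof -
    have zk: "z + k / t \<in> ball z \<rho>" using k t by (simp add: dist_real_def field_simps)
    have "(1 - t) * z + t * (z + k / t) = z + k" using t by (simp add: field_simps)
    then have "g (z + k) \<le> (1 - t) * g z + t * g (z + k / t)"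
      using midpoint_convex_on_dyadic[OF mid S z, of "z + k / t" n] zk ball unfolding t_def by auto
    also have "\<dots> \<le> (1 - t) * g z + t * M" using bound[OF zk] t by simp
    finally show ?thesis by (simp add: algebra_simps)
  qed
  have "t * \<rho> \<le> \<rho>" using t \<open>\<rho> > 0\<close> by simp
  then have "z + h \<in> S" "z - h \<in> S" using h ball unfolding t_def by (auto simp: dist_real_def)
  then have "g (((z + h) + (z - h)) / 2) \<le> (g (z + h) + g (z - h)) / 2"
    using mid unfolding midpoint_convex_on_def by blast
  moreover have "g (z + h) \<le> g z + t * (M - g z)" "g (z - h) \<le> g z + t * (M - g z)"
    using upper[of h] upper[of "- h"] h unfolding t_def by simp_all
  ultimately show ?thesis unfolding t_def x_eq by simp
qed

lemma midpoint_convex_on_isCont: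
  assumes mid: "midpoint_convex_on S g" and S: "convex S"
    and \<rho>: "\<rho> > 0" and ball: "ball z \<rho> \<subseteq> S" and bound: "\<And>y. y \<in> ball z \<rho> \<Longrightarrow> g y \<le> M"
  shows "isCont g z"
  unfolding continuous_at_eps_delta
proof (intro allI impI)
  fix e :: real assume e: "e > 0"
  have D: "M - g z \<ge> 0" using bound[of z] \<rho> by simp
  obtain n where n: "(1/2::real)^n < e / (M - g z + 1)"
    using real_arch_pow_inv[of "e / (M - g z + 1)" "1/2"] e D by auto
  have "(1/2)^n * (M - g z) \<le> (1/2)^n * (M - g z + 1)" by simp
  also have "\<dots> < e" using n D by (simp add: field_simps)
  finally have small: "(1/2)^n * (M - g z) < e" .
  show "\<exists>d>0. \<forall>x. dist x z < d \<longrightarrow> dist (g x) (g z) < e"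
  proof (intro exI conjI allI impI)
    show "(1/2)^n * \<rho> > 0" using \<rho> by simp
    fix x assume "dist x z < (1/2)^n * \<rho>"
    then have "\<bar>x - z\<bar> < (1/2)^n * \<rho>" by (simp add: dist_real_def)
    from midpoint_convex_on_near_bound[OF mid S ball bound this] small
    show "dist (g x) (g z) < e" unfolding dist_real_def by linarith
  qed
qed

lemma midpoint_convex_on_bounded_near:
  assumes mid: "midpoint_convex_on S g" and S: "convex S" "open S"
    and \<delta>: "\<delta> > 0" and ball: "ball c \<delta> \<subseteq> S" and bound: "\<And>y. y \<in> ball c \<delta> \<Longrightarrow> g y \<le> M"
    and z: "z \<in> S"
  obtains \<rho> M' where "\<rho> > 0" "ball z \<rho> \<subseteq> S" "\<And>y. y \<in> ball z \<rho> \<Longrightarrow> g y \<le> M'"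
proof -
  obtain \<epsilon> where \<epsilon>: "\<epsilon> > 0" "ball z \<epsilon> \<subseteq> S"
    using S(2) z open_contains_ball by blast
  have den: "2 * \<bar>z - c\<bar> + 1 > 0" by (simp add: add_nonneg_pos)
  then have "\<epsilon> / (2 * \<bar>z - c\<bar> + 1) > 0" using \<epsilon> by simp
  then obtain n where n: "(1/2::real)^n < min (1/2) (\<epsilon> / (2 * \<bar>z - c\<bar> + 1))"
    using real_arch_pow_inv[of "min (1/2) (\<epsilon> / (2 * \<bar>z - c\<bar> + 1))" "1/2"] by auto
  define t :: real where "t = (1/2)^n"
  have t: "t > 0" "t < 1/2" "t * (2 * \<bar>z - c\<bar> + 1) < \<epsilon>"
    using n den unfolding t_def by (auto simp: field_simps)
  \<comment> \<open>\<open>z = (1 - t) * a + t * c\<close>: the homothety with centre \<open>a\<close> and ratio \<open>t\<close>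
    maps \<open>ball c \<delta>\<close> onto \<open>ball z (t * \<delta>)\<close>\<close>
  define a where "a = (z - t * c) / (1 - t)"
  have "a - z = t * (z - c) / (1 - t)" unfolding a_def using t by (simp add: field_simps)
  then have "\<bar>a - z\<bar> = t * \<bar>z - c\<bar> / (1 - t)" using t by (simp add: abs_mult)
  also have "\<dots> \<le> 2 * t * \<bar>z - c\<bar>"
  proof -
    have "t * \<bar>z - c\<bar> * 1 \<le> t * \<bar>z - c\<bar> * (2 * (1 - t))" using t by (intro mult_left_mono) auto
    then show ?thesis using t by (simp add: pos_divide_le_eq algebra_simps)
  qed
  also have "\<dots> < \<epsilon>" using t by (simp add: algebra_simps)
  finally have a: "a \<in> S" using \<epsilon> by (auto simp: dist_real_def)
  have decomp: "\<exists>w \<in> ball c \<delta>. y = (1 - t) * a + t * w" if y: "y \<in> ball z (t * \<delta>)" for y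
  proof
    show "c + (y - z) / t \<in> ball c \<delta>"
      using y t by (simp add: dist_real_def field_simps)
    show "y = (1 - t) * a + t * (c + (y - z) / t)" unfolding a_def using t by (simp add: field_simps)
  qed
  show ?thesis
  proof
    show "t * \<delta> > 0" using t \<delta> by simp
    show "ball z (t * \<delta>) \<subseteq> S"
      using decomp convexD[OF S(1) a, of _ "1 - t" t] ball t by fastforce
    fix y assume "y \<in> ball z (t * \<delta>)"
    then obtain w where w: "w \<in> ball c \<delta>" and y: "y = (1 - t) * a + t * w" using decomp by blast
    have "g y \<le> (1 - t) * g a + t * g w"
      using midpoint_convex_on_dyadic[OF mid S(1) a, of w n] w ball y unfolding t_def by auto
    also have "\<dots> \<le> (1 - t) * g a + t * M" using bound[OF w] t by simp
    finally show "g y \<le> (1 - t) * g a + t * M" .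
  qed
qed

theorem bernstein_doetsch:
  assumes mid: "midpoint_convex_on S g" and S: "convex S" "open S"
    and \<delta>: "\<delta> > 0" and ball: "ball c \<delta> \<subseteq> S" and bound: "\<And>y. y \<in> ball c \<delta> \<Longrightarrow> g y \<le> M"
  shows "continuous_on S g"
proof (intro continuous_at_imp_continuous_on ballI)
  fix z assume "z \<in> S"
  then obtain \<rho> M' where "\<rho> > 0" "ball z \<rho> \<subseteq> S" "\<And>y. y \<in> ball z \<rho> \<Longrightarrow> g y \<le> M'"
    using midpoint_convex_on_bounded_near[OF mid S \<delta> ball bound] by blast
  then show "isCont g z" by (intro midpoint_convex_on_isCont[OF mid S(1)])
qed

lemma midpoint_convex_on_unit_interval_nonpos:
  assumes mid: "midpoint_convex_on {0..1} h" and cont: "continuous_on {0..1} h"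
    and ends: "h 0 \<le> 0" "h 1 \<le> 0" and s: "s \<in> {0..1}"
  shows "h s \<le> 0"
proof (rule ccontr)
  assume "\<not> ?thesis"
  obtain s0 where s0: "s0 \<in> {0..1}" "\<And>s. s \<in> {0..1} \<Longrightarrow> h s \<le> h s0"
    using continuous_attains_sup[OF compact_Icc _ cont] by auto
  define m where "m = h s0"
  have m_pos: "m > 0" using s0(2)[OF s] \<open>\<not> h s \<le> 0\<close> unfolding m_def by simp
  \<comment> \<open>the leftmost maximiser of \<open>h\<close> violates midpoint convexity\<close>
  define Smax where "Smax = {s \<in> {0..1}. h s = m}"
  have "closed Smax"
    unfolding Smax_def by (rule continuous_closed_preimage_constant[OF cont closed_atLeastAtMost])
  moreover have "Smax \<noteq> {}" unfolding Smax_def m_def using s0 by auto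
  moreover have Smax_bdd: "bdd_below Smax" unfolding Smax_def by (rule bdd_belowI[of _ 0]) auto
  ultimately have "Inf Smax \<in> Smax" by (intro closed_contains_Inf)
  then have s1: "0 < Inf Smax" "Inf Smax < 1" "h (Inf Smax) = m"
    using m_pos ends unfolding Smax_def by (auto simp: order_le_less)
  define s1 where "s1 = Inf Smax"
  define d where "d = min s1 (1 - s1)"
  have d: "d > 0" "s1 - d \<in> {0..1}" "s1 + d \<in> {0..1}" using s1 unfolding d_def s1_def by auto
  have "h (s1 - d) \<noteq> m"
  proof
    assume "h (s1 - d) = m"
    then have "s1 - d \<in> Smax" unfolding Smax_def using d by simp
    then have "s1 \<le> s1 - d" unfolding s1_def by (rule cInf_lower[OF _ Smax_bdd])
    then show False using d by simp
  qed
  then have "h (s1 - d) < m" using s0(2)[OF d(2)] unfolding m_def by simp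
  moreover have "h (s1 + d) \<le> m" using s0(2)[OF d(3)] unfolding m_def by simp
  moreover have "h (((s1 - d) + (s1 + d)) / 2) \<le> (h (s1 - d) + h (s1 + d)) / 2"
    using mid d unfolding midpoint_convex_on_def by blast
  ultimately show False using s1 unfolding s1_def by simp
qed

lemma convex_on_if_midpoint_convex_on_continuous:
  assumes mid: "midpoint_convex_on S g" and S: "convex S" and cont: "continuous_on S g"
  shows "convex_on S g"
proof (rule convex_onI[OF _ S])
  fix t x y :: real assume t: "0 < t" "t < 1" and x: "x \<in> S" and y: "y \<in> S"
  define p where "p s = (1 - s) * x + s * y" for s
  define h where "h s = g (p s) - ((1 - s) * g x + s * g y)" for s
  have p_in: "p s \<in> S" if "s \<in> {0..1}" for s
    unfolding p_def using convexD[OF S x y, of "1 - s" s] that by simp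
  have "continuous_on {0..1} p" unfolding p_def by (intro continuous_intros)
  then have "continuous_on {0..1} (\<lambda>s. g (p s))"
    by (rule continuous_on_compose2[OF cont]) (use p_in in auto)
  then have h_cont: "continuous_on {0..1} h" unfolding h_def by (intro continuous_intros)
  have mid_h: "midpoint_convex_on {0..1} h"
    unfolding midpoint_convex_on_def
  proof (intro ballI)
    fix u v :: real assume uv: "u \<in> {0..1}" "v \<in> {0..1}"
    have "p ((u + v) / 2) = (p u + p v) / 2" unfolding p_def by (simp add: field_simps)
    then have "g (p ((u + v) / 2)) \<le> (g (p u) + g (p v)) / 2"
      using mid p_in[OF uv(1)] p_in[OF uv(2)] unfolding midpoint_convex_on_def by metis
    then show "h ((u + v) / 2) \<le> (h u + h v) / 2" unfolding h_def by (simp add: field_simps)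
  qed
  have "h 0 = 0" "h 1 = 0" unfolding h_def p_def by simp_all
  then have "h t \<le> 0"
    by (intro midpoint_convex_on_unit_interval_nonpos[OF mid_h h_cont, of t]) (use t in auto)
  then show "g ((1 - t) *\<^sub>R x + t *\<^sub>R y) \<le> (1 - t) * g x + t * g y" unfolding h_def p_def by simp
qed

section \<open>Sets of positive Lebesgue measure on the line\<close>

definition grid_cell :: "real \<Rightarrow> real \<Rightarrow> nat \<Rightarrow> real set" where
  "grid_cell a L k = {a + real k * L ..< a + real (Suc k) * L}"

lemma grid_cell_disjoint:
  assumes "L > 0" "k \<noteq> l"
  shows "grid_cell a L k \<inter> grid_cell a L l = {}"
proof -
  have "grid_cell a L k \<inter> grid_cell a L l = {}" if "k < l" for k l
  proof -
    have "real (Suc k) * L \<le> real l * L" using that assms(1) by (intro mult_right_mono) auto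
    then show ?thesis unfolding grid_cell_def by auto
  qed
  then show ?thesis using assms(2) by (metis Int_commute linorder_neqE_nat)
qed

lemma measure_grid_cell: "L > 0 \<Longrightarrow> measure lebesgue (grid_cell a L k) = L"
  unfolding grid_cell_def by (simp add: algebra_simps)

lemma grid_cell_subset_cball: "grid_cell a L k \<subseteq> cball (a + real k * L + L / 2) (L / 2)"
proof
  fix x assume "x \<in> grid_cell a L k"
  then have "a + real k * L \<le> x" "x < a + real k * L + L"
    unfolding grid_cell_def by (auto simp: distrib_right)
  then show "x \<in> cball (a + real k * L + L / 2) (L / 2)"
    unfolding mem_cball dist_real_def abs_le_iff by linarith
qed

lemma dist_grid_cell:
  assumes "x \<in> grid_cell a L k" "y \<in> grid_cell a L k"
  shows "dist x y \<le> L"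
proof -
  define c where "c = a + real k * L + L / 2"
  have "dist c x \<le> L / 2" "dist c y \<le> L / 2"
    using assms grid_cell_subset_cball[of a L k] unfolding c_def by auto
  then show ?thesis using dist_triangle[of x y c] by (simp add: dist_commute)
qed

lemma grid_cell_lmeasurable [simp]: "grid_cell a L k \<in> lmeasurable"
proof -
  have "grid_cell a L k = {a + real k * L .. a + real (Suc k) * L} - {a + real (Suc k) * L}"
    unfolding grid_cell_def by auto
  then show ?thesis by (simp add: fmeasurable_Diff)
qed

lemma bounded_subset_grid_cells:
  assumes "bounded A" "L > 0"
  obtains a N where "A \<subseteq> (\<Union>k<N. grid_cell a L k)"
proof -
  obtain R where R: "\<And>x. x \<in> A \<Longrightarrow> \<bar>x\<bar> \<le> R"
    using assms(1) bounded_real by blast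
  have "A \<subseteq> (\<Union>k<nat \<lceil>2 * R / L\<rceil> + 1. grid_cell (- R) L k)"
  proof
    fix x assume x: "x \<in> A"
    define k where "k = nat \<lfloor>(x + R) / L\<rfloor>"
    have "0 \<le> (x + R) / L" "(x + R) / L \<le> 2 * R / L"
      using R[OF x] assms(2) by (auto intro!: divide_right_mono simp: abs_le_iff)
    then have k: "real k \<le> (x + R) / L" "(x + R) / L < real k + 1" "k < nat \<lceil>2 * R / L\<rceil> + 1"
      unfolding k_def by linarith+
    then have "x \<in> grid_cell (- R) L k"
      using assms(2) unfolding grid_cell_def by (auto simp: field_simps)
    then show "x \<in> (\<Union>k<nat \<lceil>2 * R / L\<rceil> + 1. grid_cell (- R) L k)" using k(3) by blast
  qed
  then show ?thesis by (rule that)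
qed

lemma measure_Int_grid_cells:
  fixes X :: "real set"
  assumes X: "X \<in> lmeasurable" and L: "L > 0"
  shows "measure lebesgue (X \<inter> (\<Union>k<N. grid_cell a L k)) = (\<Sum>k<N. measure lebesgue (X \<inter> grid_cell a L k))"
proof -
  have disj: "disjoint_family_on (\<lambda>k. X \<inter> grid_cell a L k) {..<N}"
    using grid_cell_disjoint[OF L] unfolding disjoint_family_on_def by blast
  have cell: "X \<inter> grid_cell a L k \<in> lmeasurable" for k
    using fmeasurable_Int_fmeasurable[OF X fmeasurableD[OF grid_cell_lmeasurable]] .
  then have fin: "emeasure lebesgue (X \<inter> grid_cell a L k) \<noteq> \<infinity>" for k
    unfolding infinity_ennreal_def by (rule fmeasurableD2)
  have "measure lebesgue (\<Union>k<N. X \<inter> grid_cell a L k) = (\<Sum>k<N. measure lebesgue (X \<inter> grid_cell a L k))"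
    by (rule measure_finite_Union[OF finite_lessThan image_subsetI disj fin]) (rule fmeasurableD[OF cell])
  then show ?thesis by (simp only: Int_UN_distrib)
qed

lemma measure_Int_grid_cell_le:
  fixes A T :: "real set"
  assumes A: "A \<in> lmeasurable"
    and sparse: "\<And>c r. r > 0 \<Longrightarrow> measure lebesgue (A \<inter> cball c r) \<le> 3 * r / 2"
    and L: "L > 0" and near: "\<And>x y. x \<in> A \<Longrightarrow> dist x y \<le> L \<Longrightarrow> y \<in> T"
  shows "measure lebesgue (A \<inter> grid_cell a L k) \<le> 3 / 4 * measure lebesgue (T \<inter> grid_cell a L k)"
proof (cases "A \<inter> grid_cell a L k = {}")
  case False
  then obtain x where x: "x \<in> A" "x \<in> grid_cell a L k" by blast
  then have "grid_cell a L k \<subseteq> T" using near dist_grid_cell by blast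
  then have "measure lebesgue (T \<inter> grid_cell a L k) = L"
    using measure_grid_cell[OF L] by (simp add: Int_absorb1)
  moreover have "measure lebesgue (A \<inter> grid_cell a L k)
      \<le> measure lebesgue (A \<inter> cball (a + real k * L + L / 2) (L / 2))"
    using grid_cell_subset_cball fmeasurable_Int_fmeasurable[OF A fmeasurableD[OF grid_cell_lmeasurable]]
    by (intro measure_mono_fmeasurable fmeasurable_Int_fmeasurable[OF A]) (auto simp: fmeasurableD)
  moreover have "\<dots> \<le> 3 / 4 * L" using sparse[of "L / 2"] L by simp
  ultimately show ?thesis by simp
qed simp

lemma measure_le_three_quarters_open_superset:
  fixes A T :: "real set"
  assumes A: "compact A"
    and sparse: "\<And>c r. r > 0 \<Longrightarrow> measure lebesgue (A \<inter> cball c r) \<le> 3 * r / 2"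
    and T: "open T" "A \<subseteq> T" "T \<in> lmeasurable"
  shows "measure lebesgue A \<le> 3 / 4 * measure lebesgue T"
proof -
  have A_l: "A \<in> lmeasurable" using A by (rule lmeasurable_compact)
  have "closed (- T)" "A \<inter> - T = {}" using T(1,2) by auto
  then obtain d where d: "d > 0" "\<forall>x\<in>A. \<forall>y\<in>- T. d \<le> dist x y"
    using separate_compact_closed[OF A] by meson
  define L where "L = d / 2"
  have L: "L > 0" "L < d" using d(1) unfolding L_def by auto
  obtain a N where cover: "A \<subseteq> (\<Union>k<N. grid_cell a L k)"
    using bounded_subset_grid_cells[OF compact_imp_bounded[OF A] L(1)] .
  have near: "y \<in> T" if "x \<in> A" "dist x y \<le> L" for x y
    using d(2) L that by force
  have "measure lebesgue A = measure lebesgue (A \<inter> (\<Union>k<N. grid_cell a L k))"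
    by (simp only: Int_absorb2[OF cover])
  also have "\<dots> = (\<Sum>k<N. measure lebesgue (A \<inter> grid_cell a L k))"
    by (rule measure_Int_grid_cells[OF A_l L(1)])
  also have "\<dots> \<le> 3 / 4 * (\<Sum>k<N. measure lebesgue (T \<inter> grid_cell a L k))"
    unfolding sum_distrib_left by (intro sum_mono measure_Int_grid_cell_le[OF A_l sparse L(1) near])
  also have "\<dots> = 3 / 4 * measure lebesgue (T \<inter> (\<Union>k<N. grid_cell a L k))"
    by (simp only: measure_Int_grid_cells[OF T(3) L(1)])
  also have "\<dots> \<le> 3 / 4 * measure lebesgue T"
  proof -
    have "(\<Union>k<N. grid_cell a L k) \<in> sets lebesgue"
      by (rule sets.finite_UN) (simp_all add: fmeasurableD)
    then show ?thesis
      using T(3) fmeasurable_Int_fmeasurable[OF T(3)]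
      by (intro mult_left_mono measure_mono_fmeasurable) auto
  qed
  finally show ?thesis .
qed

text \<open>As \<open>measure lebesgue (cball c r) = 2 * r\<close>, the conclusion says that \<open>A\<close> fills more than
  three quarters of some ball.\<close>

lemma compact_dense_cball:
  fixes A :: "real set"
  assumes A: "compact A" and A_pos: "measure lebesgue A > 0"
  obtains c r where "r > 0" "measure lebesgue (A \<inter> cball c r) > 3 * r / 2"
proof (rule ccontr)
  assume "\<not> thesis"
  then have sparse: "\<And>c r. r > 0 \<Longrightarrow> measure lebesgue (A \<inter> cball c r) \<le> 3 * r / 2"
    using that by (meson not_le)
  have A_l: "A \<in> lmeasurable" using A by (rule lmeasurable_compact)
  obtain T where T: "open T" "A \<subseteq> T" "T - A \<in> lmeasurable"
    and T_A: "emeasure lebesgue (T - A) < ennreal (measure lebesgue A / 6)"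
    using sets_lebesgue_outer_open[OF fmeasurableD[OF A_l], of "measure lebesgue A / 6"] A_pos by auto
  have "measure lebesgue (T - A) < measure lebesgue A / 6"
    using T_A emeasure_eq_measure2[OF T(3)] by (simp add: ennreal_less_iff)
  moreover have T_l: "T \<in> lmeasurable" "measure lebesgue T = measure lebesgue A + measure lebesgue (T - A)"
    using measure_Un2[OF A_l T(3)] fmeasurable.Un[OF A_l T(3)] T(2) by (simp_all add: Un_absorb1)
  ultimately have "measure lebesgue T < 7 / 6 * measure lebesgue A" by simp
  moreover have "measure lebesgue A \<le> 3 / 4 * measure lebesgue T"
    using measure_le_three_quarters_open_superset[OF A sparse T(1,2) T_l(1)] .
  ultimately show False using A_pos by simp
qed

lemma measure_image_has_field_derivative:
  fixes g g' :: "real \<Rightarrow> real"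
  assumes K: "compact K"
    and der: "\<And>x. x \<in> K \<Longrightarrow> (g has_field_derivative g' x) (at x within K)"
    and inj: "inj_on g K"
  shows "(\<lambda>x. \<bar>g' x\<bar>) integrable_on K" and "measure lebesgue (g ` K) = integral K (\<lambda>x. \<bar>g' x\<bar>)"
proof -
  have "continuous_on K g"
    using der by (meson DERIV_continuous continuous_on_eq_continuous_within)
  then have "g ` K \<in> lmeasurable" by (intro lmeasurable_compact compact_continuous_image K)
  then have "(\<lambda>x. 1::real) absolutely_integrable_on g ` K \<and>
      integral (g ` K) (\<lambda>x. 1) = measure lebesgue (g ` K)"
    by (simp add: lmeasure_integral)
  then have "(\<lambda>x. \<bar>g' x\<bar> * 1) absolutely_integrable_on K \<and>
      integral K (\<lambda>x. \<bar>g' x\<bar> * 1) = measure lebesgue (g ` K)"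
    using has_absolute_integral_change_of_variables_1'[OF _ der inj, of "\<lambda>x. 1"] K
    by (simp add: lmeasurable_compact fmeasurableD)
  then show "(\<lambda>x. \<bar>g' x\<bar>) integrable_on K" "measure lebesgue (g ` K) = integral K (\<lambda>x. \<bar>g' x\<bar>)"
    using set_lebesgue_integral_eq_integral(1) by auto
qed

lemma measure_reflect_compact:
  fixes B :: "real set"
  assumes "compact B"
  shows "measure lebesgue ((\<lambda>x. 2 * z - x) ` B) = measure lebesgue B"
proof -
  have der: "((\<lambda>x. 2 * z - x) has_field_derivative - 1) (at x within B)" for x
    by (auto intro!: derivative_eq_intros)
  have "inj_on (\<lambda>x. 2 * z - x) B" by (auto simp: inj_on_def)
  then show ?thesis
    using measure_image_has_field_derivative(2)[OF assms der] lmeasure_integral[OF lmeasurable_compact[OF assms]]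
    by simp
qed

lemma midpoint_mem_if_dense_cball:
  fixes A :: "real set"
  assumes A: "compact A" and r: "r > 0"
    and dense: "measure lebesgue (A \<inter> cball c r) > 3 * r / 2"
    and z: "\<bar>z - c\<bar> < r / 4"
  shows "\<exists>a\<in>A. \<exists>b\<in>A. z = (a + b) / 2"
proof (rule ccontr)
  \<comment> \<open>otherwise \<open>B = A \<inter> cball c r\<close> and its reflection in \<open>z\<close> are disjoint, but both lie in a
    ball too short to hold two copies of \<open>B\<close>\<close>
  assume no_midpoint: "\<not> ?thesis"
  define B where "B = A \<inter> cball c r"
  have B: "compact B" unfolding B_def using A by (simp add: compact_Int_closed)
  then have B_l: "B \<in> lmeasurable" by (rule lmeasurable_compact)
  define R where "R = (\<lambda>x. 2 * z - x) ` B"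
  have R_measure: "measure lebesgue R = measure lebesgue B"
    unfolding R_def by (rule measure_reflect_compact[OF B])
  have R_l: "R \<in> lmeasurable"
    unfolding R_def by (intro lmeasurable_compact compact_continuous_image B continuous_intros)
  have "R \<inter> B = {}"
  proof (rule ccontr)
    assume "R \<inter> B \<noteq> {}"
    then obtain a b where "a \<in> B" "b \<in> B" "a = 2 * z - b" unfolding R_def by blast
    then have "a \<in> A" "b \<in> A" "z = (a + b) / 2" unfolding B_def by auto
    then show False using no_midpoint by blast
  qed
  then have "2 * measure lebesgue B = measure lebesgue (B \<union> R)"
    using measure_Un2[OF B_l R_l] R_measure by (simp add: Diff_triv)
  also have "\<dots> \<le> measure lebesgue (cball c (r + 2 * \<bar>z - c\<bar>))"
  proof (rule measure_mono_fmeasurable)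
    show "B \<union> R \<subseteq> cball c (r + 2 * \<bar>z - c\<bar>)"
    proof
      fix x assume "x \<in> B \<union> R"
      then obtain b where b: "b \<in> B" "x = b \<or> x = 2 * z - b" unfolding R_def by blast
      then have "\<bar>b - c\<bar> \<le> r" unfolding B_def by (simp add: dist_real_def abs_minus_commute)
      then show "x \<in> cball c (r + 2 * \<bar>z - c\<bar>)"
        using b(2) abs_ge_self[of "z - c"] abs_ge_minus_self[of "z - c"]
        by (auto simp: dist_real_def abs_le_iff)
    qed
  qed (use B_l R_l in auto)
  also have "\<dots> = 2 * (r + 2 * \<bar>z - c\<bar>)" using r by (simp add: cball_eq_atLeastAtMost)
  finally have "measure lebesgue B \<le> r + 2 * \<bar>z - c\<bar>" by simp
  then show False using dense z unfolding B_def by simp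
qed

lemma ball_subset_midpoints:
  fixes A :: "real set"
  assumes "compact A" "measure lebesgue A > 0"
  obtains c \<delta> where "\<delta> > 0" "ball c \<delta> \<subseteq> {(a + b) / 2 | a b. a \<in> A \<and> b \<in> A}"
proof -
  obtain c r where r: "r > 0" and dense: "measure lebesgue (A \<inter> cball c r) > 3 * r / 2"
    using compact_dense_cball[OF assms] .
  have "ball c (r / 4) \<subseteq> {(a + b) / 2 | a b. a \<in> A \<and> b \<in> A}"
  proof
    fix z assume "z \<in> ball c (r / 4)"
    then have "\<bar>z - c\<bar> < r / 4" by (simp add: dist_real_def abs_minus_commute)
    then show "z \<in> {(a + b) / 2 | a b. a \<in> A \<and> b \<in> A}"
      using midpoint_mem_if_dense_cball[OF assms(1) r dense] by blast
  qed
  then show ?thesis using \<open>r > 0\<close> that[of "r / 4"] by simp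
qed

lemma strict_mono_on_if_deriv_pos:
  fixes g g' :: "real \<Rightarrow> real"
  assumes S: "convex S" and der: "\<And>x. x \<in> S \<Longrightarrow> (g has_field_derivative g' x) (at x)"
    and g'_pos: "\<And>x. x \<in> S \<Longrightarrow> g' x > 0"
  shows "strict_mono_on S g"
proof (rule strict_mono_onI)
  fix a b assume "a \<in> S" "b \<in> S" "a < b"
  then have ab_S: "{a..b} \<subseteq> S"
    using convex_contains_segment[of S] S by (metis closed_segment_eq_real_ivl1 less_imp_le)
  show "g a < g b"
  proof (rule DERIV_pos_imp_increasing[OF \<open>a < b\<close>])
    fix x assume "a \<le> x" "x \<le> b"
    then have "x \<in> S" using ab_S by auto
    then show "\<exists>y. (g has_real_derivative y) (at x) \<and> 0 < y" using der g'_pos by blast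
  qed
qed

lemma measure_image_pos_if_deriv_pos:
  fixes g g' :: "real \<Rightarrow> real"
  assumes S: "convex S" and der: "\<And>x. x \<in> S \<Longrightarrow> (g has_field_derivative g' x) (at x)"
    and g'_cont: "continuous_on S g'" and g'_pos: "\<And>x. x \<in> S \<Longrightarrow> g' x > 0"
    and K: "compact K" "K \<subseteq> S" "measure lebesgue K > 0"
  shows "compact (g ` K)" and "measure lebesgue (g ` K) > 0"
proof -
  have der_K: "(g has_field_derivative g' x) (at x within K)" if "x \<in> K" for x
    using der K(2) that has_field_derivative_at_within by blast
  then have "continuous_on K g"
    by (meson DERIV_continuous continuous_on_eq_continuous_within)
  then show "compact (g ` K)" using K(1) by (rule compact_continuous_image)
  have "strict_mono_on S g" by (rule strict_mono_on_if_deriv_pos[OF S der g'_pos])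
  then have inj: "inj_on g K" using K(2) strict_mono_on_imp_inj_on inj_on_subset by blast
  have "K \<noteq> {}" using K(3) by auto
  then obtain xm where xm: "xm \<in> K" "\<And>x. x \<in> K \<Longrightarrow> g' xm \<le> g' x"
    using continuous_attains_inf[OF K(1) _ continuous_on_subset[OF g'_cont K(2)]] by blast
  have "(\<lambda>x. g' xm) integrable_on K"
    by (intro integrable_on_const lmeasurable_compact K(1))
  moreover have "g' xm \<le> \<bar>g' x\<bar>" if "x \<in> K" for x using xm(2)[OF that] by simp
  ultimately have "integral K (\<lambda>x. g' xm) \<le> integral K (\<lambda>x. \<bar>g' x\<bar>)"
    using measure_image_has_field_derivative(1)[OF K(1) der_K inj] by (intro integral_le)
  moreover have "integral K (\<lambda>x. g' xm) = g' xm * measure lebesgue K"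
    using integral_mult_right[of K "g' xm" "\<lambda>x. 1"] lmeasure_integral[OF lmeasurable_compact[OF K(1)]]
    by simp
  ultimately have "g' xm * measure lebesgue K \<le> integral K (\<lambda>x. \<bar>g' x\<bar>)" by simp
  moreover have "g' xm * measure lebesgue K > 0" using g'_pos xm(1) K by auto
  ultimately show "measure lebesgue (g ` K) > 0"
    using measure_image_has_field_derivative(2)[OF K(1) der_K inj] by simp
qed

lemma inner_lebesgue_measure_pos_obtains_compact:
  assumes "inner_lebesgue_measure P > 0"
  obtains K where "compact K" "K \<subseteq> P" "measure lebesgue K > 0"
proof -
  obtain K where K: "compact K" "K \<subseteq> P" "emeasure lborel K > 0"
    using assms unfolding inner_lebesgue_measure_def by (auto simp: less_SUP_iff)
  have "emeasure lebesgue K = emeasure lborel K"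
    using K(1) by (simp add: borel_compact)
  then have "ennreal (measure lebesgue K) > 0"
    using K(3) emeasure_eq_measure2[OF lmeasurable_compact[OF K(1)]] by simp
  then have "measure lebesgue K > 0" by simp
  with K(1,2) show ?thesis by (rule that)
qed

theorem midpoint_convex_on_continuous_on_if_bounded:
  fixes A S :: "real set"
  assumes mid: "midpoint_convex_on S g" and S: "convex S" "open S"
    and A: "compact A" "A \<subseteq> S" "measure lebesgue A > 0" and bound: "\<And>a. a \<in> A \<Longrightarrow> g a \<le> M"
  shows "continuous_on S g"
proof -
  obtain c \<delta> where \<delta>: "\<delta> > 0" and ball: "ball c \<delta> \<subseteq> {(a + b) / 2 | a b. a \<in> A \<and> b \<in> A}"
    using ball_subset_midpoints[OF A(1,3)] .
  have "y \<in> S \<and> g y \<le> M" if "y \<in> ball c \<delta>" for y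
  proof -
    obtain a b where ab: "a \<in> A" "b \<in> A" "y = (a + b) / 2" using ball \<open>y \<in> ball c \<delta>\<close> by blast
    have "(a + b) / 2 \<in> S" using convexD[OF S(1), of a b "1/2" "1/2"] ab(1,2) A(2) by (auto simp: field_simps)
    then have "y \<in> S" unfolding ab(3) .
    moreover have "g y \<le> (g a + g b) / 2" using mid ab A(2) unfolding midpoint_convex_on_def by blast
    ultimately show ?thesis using bound[OF ab(1)] bound[OF ab(2)] by simp
  qed
  then show ?thesis using bernstein_doetsch[OF mid S \<delta>] by blast
qed

section \<open>Power means\<close>

lemma H_pos:
  assumes "a > 0" "b > 0"
  shows "H q a b > 0"
proof -
  have "a powr q + b powr q > 0" using assms by (intro add_pos_pos) auto
  then show ?thesis using assms unfolding H_def by auto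
qed

lemma H_le_max:
  assumes a: "a > 0" and b: "b > 0"
  shows "H q a b \<le> max a b"
proof -
  define M where "M = max a b"
  have M: "M > 0" "a \<le> M" "b \<le> M" using a b unfolding M_def by auto
  consider "q = 0" | "q > 0" | "q < 0" by linarith
  then show ?thesis
  proof cases
    case 1
    have "sqrt (a * b) \<le> sqrt (M * M)" using M a b by (intro real_sqrt_le_mono mult_mono) auto
    then show ?thesis using 1 M unfolding H_def M_def[symmetric] by simp
  next
    case 2
    have "(a powr q + b powr q) / 2 \<le> M powr q"
      using M a b 2 powr_mono2[of q a M] powr_mono2[of q b M] by simp
    then have "((a powr q + b powr q) / 2) powr (1 / q) \<le> (M powr q) powr (1 / q)"
      using 2 by (intro powr_mono2) (auto intro: add_nonneg_nonneg)
    then show ?thesis using 2 M unfolding H_def M_def[symmetric] by (simp add: powr_powr)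
  next
    case 3
    have "M powr q \<le> (a powr q + b powr q) / 2"
      using M a b 3 powr_mono2'[of q a M] powr_mono2'[of q b M] by simp
    then have "((a powr q + b powr q) / 2) powr (1 / q) \<le> (M powr q) powr (1 / q)"
      using 3 M by (intro powr_mono2') auto
    then show ?thesis using 3 M unfolding H_def M_def[symmetric] by (simp add: powr_powr)
  qed
qed

text \<open>Strict convexity of \<open>t \<mapsto> t * ln t\<close> at the midpoint of \<open>1\<close> and \<open>s\<close>.\<close>

lemma xlnx_midpoint_less:
  fixes s :: real
  assumes s: "s > 1"
  shows "(1 + s) * ln ((1 + s) / 2) < s * ln s"
proof -
  define k where "k x = x * ln x - (1 + x) * ln ((1 + x) / 2)" for x :: real
  have "k 1 < k s"
  proof (rule DERIV_pos_imp_increasing_open[OF s])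
    fix x :: real assume x: "1 < x" "x < s"
    then have "(k has_real_derivative ln x - ln ((1 + x) / 2)) (at x)"
      unfolding k_def by (auto intro!: derivative_eq_intros)
    moreover have "ln ((1 + x) / 2) < ln x" using x by simp
    ultimately show "\<exists>y. (k has_real_derivative y) (at x) \<and> 0 < y" by auto
  next
    show "continuous_on {1..s} k" unfolding k_def by (intro continuous_intros) auto
  qed
  then show ?thesis unfolding k_def by simp
qed

definition ln_power_mean_1_2 :: "real \<Rightarrow> real" where
  "ln_power_mean_1_2 p = ln ((1 + 2 powr p) / 2) / p"

definition deriv_ln_power_mean_1_2 :: "real \<Rightarrow> real" where
  "deriv_ln_power_mean_1_2 p = (p * (2 powr p * ln 2 / (1 + 2 powr p)) - ln ((1 + 2 powr p) / 2)) / p\<^sup>2"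

lemma H_1_2_powr:
  assumes p: "p > 0"
  shows "H p 1 2 powr r = exp (r * ln_power_mean_1_2 p)"
proof -
  have "(1 + 2 powr p) / 2 > 0" by (intro divide_pos_pos add_pos_nonneg) auto
  then show ?thesis
    using p unfolding H_def ln_power_mean_1_2_def by (simp add: powr_powr powr_def field_simps)
qed

lemma ln_power_mean_1_2_has_derivative:
  assumes "p \<noteq> 0"
  shows "(ln_power_mean_1_2 has_real_derivative deriv_ln_power_mean_1_2 p) (at p)"
proof -
  have "1 + 2 powr p > 0" by (intro add_pos_nonneg) auto
  then have "((\<lambda>p. ln ((1 + 2 powr p) / 2)) has_real_derivative 2 powr p * ln 2 / (1 + 2 powr p)) (at p)"
    by (auto intro!: derivative_eq_intros simp: field_simps)
  from DERIV_divide[OF this DERIV_ident assms] show ?thesis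
    unfolding ln_power_mean_1_2_def deriv_ln_power_mean_1_2_def by (simp add: power2_eq_square mult.commute)
qed

lemma continuous_on_deriv_ln_power_mean_1_2: "continuous_on {0<..} deriv_ln_power_mean_1_2"
proof -
  have "1 + 2 powr p \<noteq> 0" for p :: real using add_pos_nonneg[of 1 "2 powr p"] by auto
  then show ?thesis
    unfolding deriv_ln_power_mean_1_2_def by (intro continuous_intros) auto
qed

lemma deriv_ln_power_mean_1_2_pos:
  assumes p: "p > 0"
  shows "deriv_ln_power_mean_1_2 p > 0"
proof -
  define s where "s = 2 powr p"
  have s: "s > 1" "p * ln 2 = ln s" unfolding s_def using p by auto
  have "p * (s * ln 2 / (1 + s)) = s * (p * ln 2) / (1 + s)" by simp
  also have "\<dots> = s * ln s / (1 + s)" unfolding s(2) ..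
  also have "\<dots> > ln ((1 + s) / 2)"
    using xlnx_midpoint_less[OF s(1)] s(1) by (simp add: field_simps)
  finally have "p * (s * ln 2 / (1 + s)) - ln ((1 + s) / 2) > 0" by simp
  then show ?thesis using p unfolding deriv_ln_power_mean_1_2_def s_def by simp
qed

lemma power_mean_1_2_image_measure_pos:
  assumes r: "r > 0" and K: "compact K" "K \<subseteq> {0<..}" "measure lebesgue K > 0"
  shows "compact ((\<lambda>p. H p 1 2 powr r) ` K)" and "measure lebesgue ((\<lambda>p. H p 1 2 powr r) ` K) > 0"
proof -
  define g where "g p = exp (r * ln_power_mean_1_2 p)" for p
  define g' where "g' p = g p * (r * deriv_ln_power_mean_1_2 p)" for p
  have der: "(g has_field_derivative g' p) (at p)" if "p \<in> {0<..}" for p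
    unfolding g_def g'_def using that
    by (intro DERIV_fun_exp DERIV_cmult ln_power_mean_1_2_has_derivative) simp
  then have "continuous_on {0<..} g"
    by (intro continuous_at_imp_continuous_on ballI DERIV_isCont) auto
  then have "continuous_on {0<..} g'"
    unfolding g'_def by (intro continuous_intros continuous_on_deriv_ln_power_mean_1_2)
  moreover have "g' p > 0" if "p \<in> {0<..}" for p
    using r that deriv_ln_power_mean_1_2_pos unfolding g'_def g_def by simp
  moreover have "(\<lambda>p. H p 1 2 powr r) ` K = g ` K"
    using K(2) H_1_2_powr unfolding g_def by (intro image_cong) auto
  ultimately show "compact ((\<lambda>p. H p 1 2 powr r) ` K)" "measure lebesgue ((\<lambda>p. H p 1 2 powr r) ` K) > 0"
    using measure_image_pos_if_deriv_pos[OF convex_real_interval(3) der _ _ K] by auto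
qed

section \<open>The functions \<open>fpq f p q\<close>\<close>

definition power_mean_generator :: "real \<Rightarrow> real \<Rightarrow> real" where
  "power_mean_generator q t = (if q = 0 then ln t else sgn q * t powr q)"

lemma fpq_eq_power_mean_generator: "fpq f p q u = power_mean_generator q (f (u powr (1 / p)))"
  unfolding fpq_def power_mean_generator_def by simp

lemma power_mean_generator_mono:
  assumes "0 < s" "s \<le> t"
  shows "power_mean_generator q s \<le> power_mean_generator q t"
proof (cases q "0::real" rule: linorder_cases)
  case less
  then show ?thesis using assms unfolding power_mean_generator_def by (simp add: powr_mono2')
next
  case equal
  then show ?thesis using assms unfolding power_mean_generator_def by simp
next
  case greater
  then show ?thesis using assms unfolding power_mean_generator_def by (simp add: powr_mono2)
qed

lemma power_mean_generator_H:
  assumes "a > 0" "b > 0"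
  shows "power_mean_generator q (H q a b) = (power_mean_generator q a + power_mean_generator q b) / 2"
proof (cases "q = 0")
  case True
  then show ?thesis using assms unfolding power_mean_generator_def H_def by (simp add: ln_sqrt ln_mult)
next
  case False
  have "(a powr q + b powr q) / 2 > 0" using assms by (intro divide_pos_pos add_pos_pos) auto
  then have "(((a powr q + b powr q) / 2) powr (1 / q)) powr q = (a powr q + b powr q) / 2"
    using False by (simp add: powr_powr)
  then show ?thesis using False unfolding power_mean_generator_def H_def by (simp add: field_simps)
qed

lemma continuous_on_power_mean_generator: "continuous_on {0<..} (power_mean_generator q)"
proof (cases "q = 0")
  case True
  have "continuous_on {0<..} (\<lambda>t::real. ln t)" by (intro continuous_on_ln continuous_on_id) auto
  then show ?thesis using True unfolding power_mean_generator_def by simp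
next
  case False
  have "continuous_on {0<..} (\<lambda>t::real. sgn q * t powr q)"
    by (intro continuous_on_mult_left continuous_on_powr continuous_on_id continuous_on_const) auto
  then show ?thesis using False unfolding power_mean_generator_def by simp
qed

lemma continuous_on_if_continuous_on_power_mean_generator:
  assumes cont: "continuous_on S (\<lambda>x. power_mean_generator q (h x))" and pos: "\<And>x. x \<in> S \<Longrightarrow> h x > 0"
  shows "continuous_on S h"
proof (cases "q = 0")
  case True
  have "continuous_on S (\<lambda>x. exp (power_mean_generator q (h x)))" using cont by (intro continuous_intros)
  moreover have "exp (power_mean_generator q (h x)) = h x" if "x \<in> S" for x
    using True pos[OF that] unfolding power_mean_generator_def by simp
  ultimately show ?thesis by (rule continuous_on_eq)
next
  case False
  have sgn_power: "sgn q * power_mean_generator q (h x) = h x powr q" for x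
    using False unfolding power_mean_generator_def by (simp add: sgn_if)
  have "continuous_on S (\<lambda>x. (sgn q * power_mean_generator q (h x)) powr (1 / q))"
    by (intro continuous_on_powr continuous_on_mult_left cont continuous_on_const)
      (use pos in \<open>fastforce simp: sgn_power\<close>)
  moreover have "(sgn q * power_mean_generator q (h x)) powr (1 / q) = h x" if "x \<in> S" for x
    using False pos[OF that] unfolding sgn_power by (simp add: powr_powr)
  ultimately show ?thesis by (rule continuous_on_eq)
qed

lemma Rp_eq:
  assumes "p > 0"
  shows "Rp p = {0<..}"
proof -
  have "u = (u powr (1 / p)) powr p" if "u > 0" for u :: real
    using assms that by (simp add: powr_powr)
  then show ?thesis unfolding Rp_def by force
qed

lemma midpoint_convex_on_fpq:
  assumes p: "p > 0" and f_pos: "\<And>x. x > 0 \<Longrightarrow> f x > 0"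
    and jensen: "\<And>x y. x > 0 \<Longrightarrow> y > 0 \<Longrightarrow> f (H p x y) \<le> H q (f x) (f y)"
  shows "midpoint_convex_on {0<..} (fpq f p q)"
  unfolding midpoint_convex_on_def
proof (intro ballI)
  fix u v :: real assume "u \<in> {0<..}" "v \<in> {0<..}"
  then have uv: "u > 0" "v > 0" by auto
  define x y where "x = u powr (1 / p)" and "y = v powr (1 / p)"
  have xy: "x > 0" "y > 0" using uv unfolding x_def y_def by auto
  have "H p x y = ((u + v) / 2) powr (1 / p)"
    using p uv unfolding H_def x_def y_def by (simp add: powr_powr)
  then have "fpq f p q ((u + v) / 2) = power_mean_generator q (f (H p x y))"
    by (simp add: fpq_eq_power_mean_generator)
  also have "\<dots> \<le> power_mean_generator q (H q (f x) (f y))"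
    using jensen[OF xy] f_pos[OF H_pos[OF xy]] by (rule power_mean_generator_mono[rotated])
  also have "\<dots> = (fpq f p q u + fpq f p q v) / 2"
    using f_pos xy by (simp add: power_mean_generator_H fpq_eq_power_mean_generator x_def y_def)
  finally show "fpq f p q ((u + v) / 2) \<le> (fpq f p q u + fpq f p q v) / 2" .
qed

lemma continuous_on_fpq_iff:
  assumes p: "p > 0" and f_pos: "\<And>x. x > 0 \<Longrightarrow> f x > 0"
  shows "continuous_on {0<..} (fpq f p q) \<longleftrightarrow> continuous_on {0<..} f"
proof
  assume "continuous_on {0<..} (fpq f p q)"
  moreover have "continuous_on {0<..} (\<lambda>t::real. t powr p)"
    by (intro continuous_on_powr continuous_on_id continuous_on_const) auto
  ultimately have "continuous_on {0<..} (\<lambda>t. fpq f p q (t powr p))"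
    by (rule continuous_on_compose2) auto
  moreover have "fpq f p q (t powr p) = power_mean_generator q (f t)" if "t > 0" for t
    using p that by (simp add: fpq_eq_power_mean_generator powr_powr)
  ultimately have "continuous_on {0<..} (\<lambda>t. power_mean_generator q (f t))"
    by (rule continuous_on_eq) simp
  then show "continuous_on {0<..} f"
    by (rule continuous_on_if_continuous_on_power_mean_generator) (use f_pos in simp)
next
  assume f_cont: "continuous_on {0<..} f"
  have "continuous_on {0<..} (\<lambda>t::real. t powr (1 / p))"
    by (intro continuous_on_powr continuous_on_id continuous_on_const) auto
  then have "continuous_on {0<..} (\<lambda>u. f (u powr (1 / p)))"
    by (rule continuous_on_compose2[OF f_cont]) auto
  then have "continuous_on {0<..} (\<lambda>u. power_mean_generator q (f (u powr (1 / p))))"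
    by (rule continuous_on_compose2[OF continuous_on_power_mean_generator]) (use f_pos in auto)
  then show "continuous_on {0<..} (fpq f p q)" by (simp add: fpq_eq_power_mean_generator)
qed

lemma convex_on_fpq:
  assumes p: "p > 0" and f_pos: "\<And>x. x > 0 \<Longrightarrow> f x > 0"
    and jensen: "\<And>x y. x > 0 \<Longrightarrow> y > 0 \<Longrightarrow> f (H p x y) \<le> H q (f x) (f y)"
    and f_cont: "continuous_on {0<..} f"
  shows "convex_on (Rp p) (fpq f p q)"
proof -
  have "continuous_on {0<..} (fpq f p q)" using continuous_on_fpq_iff[OF p] f_pos f_cont by blast
  moreover have "midpoint_convex_on {0<..} (fpq f p q)"
    using p f_pos jensen by (rule midpoint_convex_on_fpq)
  ultimately show ?thesis
    unfolding Rp_eq[OF p] by (intro convex_on_if_midpoint_convex_on_continuous) simp_all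
qed

lemma fpq_at_power_mean_1_2_le:
  assumes p0: "p0 > 0" and p: "p > 0" and f_pos: "\<And>x. x > 0 \<Longrightarrow> f x > 0"
    and jensen: "f (H p 1 2) \<le> H q' (f 1) (f 2)"
  shows "fpq f p0 q (H p 1 2 powr p0) \<le> power_mean_generator q (max (f 1) (f 2))"
proof -
  have H: "H p 1 2 > 0" by (rule H_pos) auto
  then have "fpq f p0 q (H p 1 2 powr p0) = power_mean_generator q (f (H p 1 2))"
    using p0 by (simp add: fpq_eq_power_mean_generator powr_powr)
  also have "\<dots> \<le> power_mean_generator q (max (f 1) (f 2))"
  proof (rule power_mean_generator_mono)
    show "f (H p 1 2) \<le> max (f 1) (f 2)"
      using jensen H_le_max[of "f 1" "f 2" q'] f_pos by simp
  qed (use f_pos H in simp)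
  finally show ?thesis .
qed

theorem theorem6:
  fixes P :: "real set" and q :: "real \<Rightarrow> real" and f :: "real \<Rightarrow> real"
  assumes P_pos: "P \<subseteq> {0<..}"
    and P_meas: "inner_lebesgue_measure P > 0"
    and f_pos: "\<And>x. x > 0 \<Longrightarrow> f x > 0"
    and jensen: "\<And>p x y. p \<in> P \<Longrightarrow> x > 0 \<Longrightarrow> y > 0 \<Longrightarrow>
                   f (H p x y) \<le> H (q p) (f x) (f y)"
  shows "continuous_on {0<..} f \<and> (\<forall>p \<in> P. convex_on (Rp p) (fpq f p (q p)))"
proof -
  obtain K where K: "compact K" "K \<subseteq> P" "measure lebesgue K > 0"
    using inner_lebesgue_measure_pos_obtains_compact[OF P_meas] .
  then obtain p0 where "p0 \<in> K" by force
  then have p0: "p0 \<in> P" "p0 > 0" using K(2) P_pos by auto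
  define A where "A = (\<lambda>p. H p 1 2 powr p0) ` K"
  have "H p 1 2 > 0" for p by (rule H_pos) auto
  then have A: "compact A" "measure lebesgue A > 0" "A \<subseteq> {0<..}"
    unfolding A_def using power_mean_1_2_image_measure_pos[OF p0(2) K(1) _ K(3)] K(2) P_pos
    by (auto simp: less_le)
  have bound: "fpq f p0 (q p0) a \<le> power_mean_generator (q p0) (max (f 1) (f 2))" if a: "a \<in> A" for a
  proof -
    obtain p where p: "p \<in> P" "a = H p 1 2 powr p0" using a K(2) unfolding A_def by blast
    show ?thesis
      unfolding p(2) using p(1) P_pos jensen[of p 1 2] by (intro fpq_at_power_mean_1_2_le p0(2) f_pos) auto
  qed
  have "continuous_on {0<..} (fpq f p0 (q p0))"
    using midpoint_convex_on_fpq[where f = f, OF p0(2) f_pos jensen[OF p0(1)]] A bound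
    by (intro midpoint_convex_on_continuous_on_if_bounded) auto
  then have f_cont: "continuous_on {0<..} f"
    using continuous_on_fpq_iff[where f = f, OF p0(2) f_pos] by blast
  have "convex_on (Rp p) (fpq f p (q p))" if "p \<in> P" for p
    using that P_pos f_pos jensen f_cont by (intro convex_on_fpq) auto
  with f_cont show ?thesis by blast
qed

end
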